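(* Let $a,b>0$ and consider the symmetric Rock-Paper-Scissors game with payoff matrix $$A=\begin{pmatrix}0&-a&b\\ b&0&-a\\ -a&b&0\end{pmatrix}.$$ Writing $(x,y,z)$ for the shares of strategies 1, 2, 3, the IBR dynamics for $A$ is $$\dot x=x(z-y)(1-xy-xz-yz),\quad \dot y=y(x-z)(1-xy-xz-yz),\quad \dot z=z(y-x)(1-xy-xz-yz).$$ Its unique rest point in the interior of $\Delta$ is $(\tfrac13,\tfrac13,\tfrac13)$, and every solution starting in the interior of $\Delta$ at a state other than $(\tfrac13,\tfrac13,\tfrac13)$ is a closed orbit (a nonconstant periodic solution) around $(\tfrac13,\tfrac13,\tfrac13)$.
   Context: Let $n\ge 2$ and consider a symmetric two-player game with strategy set $S=\{1,\dots,n\}$ and payoff matrix $A=(\pi_{ij})_{i,j\in S}$, where $\pi_{ij}\in\mathbb{R}$ is the payoff of a player using strategy $i$ against an opponent using strategy $j$. The state space is the simplex $\Delta=\{x\in\mathbb{R}^n: x_i\ge 0,\ \sum_i x_i=1\}$, where $x_i$ is the population share using strategy $i$. The imitate-the-better-realization (IBR) dynamics is the ODE on $\Delta$ $$\dot x_i = x_i\sum_{j=1}^n\sum_{k=1}^n\sum_{m=1}^n x_jx_kx_m\big(\mathbf 1\{\pi_{jk}<\pi_{im}\}-\mathbf 1\{\pi_{jk}>\pi_{im}\}\big),\quad i\in S.$$ Here $n=3$. *)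

theory Defs
  imports "HOL-Analysis.Analysis"
begin

definition ibr_simplex :: "(real^'n::finite) set" where
  "ibr_simplex = {x. (\<forall>i. 0 \<le> x$i) \<and> (\<Sum>i\<in>UNIV. x$i) = 1}"

definition ibr_int_simplex :: "(real^'n::finite) set" where
  "ibr_int_simplex = {x. (\<forall>i. 0 < x$i) \<and> (\<Sum>i\<in>UNIV. x$i) = 1}"

text \<open>The IBR vector field for payoff matrix P (P i j = payoff of i against j).\<close>
definition ibr :: "('n::finite \<Rightarrow> 'n \<Rightarrow> real) \<Rightarrow> real^'n \<Rightarrow> real^'n" where
  "ibr P x = (\<chi> i. x$i * (\<Sum>j\<in>UNIV. \<Sum>k\<in>UNIV. \<Sum>m\<in>UNIV.
      x$j * x$k * x$m *
      ((if P j k < P i m then 1 else 0) - (if P j k > P i m then 1 else 0))))"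

definition rps :: "real \<Rightarrow> real \<Rightarrow> 3 \<Rightarrow> 3 \<Rightarrow> real" where
  "rps a b i j = (if i = j then 0
     else if (i, j) \<in> {(1,2), (2,3), (3,1)} then -a else b)"

definition center3 :: "real^3" where
  "center3 = (\<chi> i. 1/3)"

end

theory Submission
  imports Defs
begin

text \<open>The simplex sum and the product xyz are first integrals of the RPS dynamics, so an
  interior orbit off the centre stays on a level curve xyz = c with 0 < c < 1/27. In the
  coordinates u = 3x - 1, v = 3(y - z) centred at the rest point the orbit winds around the
  origin with angular speed bounded below, so it meets the ray v = 0, u > 0 again and again.
  That ray meets the level curve in a single point, hence the orbit returns to a state it has
  visited; since the IBR field is polynomial and thus Lipschitz on the simplex, uniqueness of
  solutions (via Gronwall) turns this return into periodicity.\<close>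

section \<open>Lipschitz continuity of the IBR field\<close>

lemma lipschitz_on_real_boundedE:
  fixes f :: "'a::metric_space \<Rightarrow> real"
  assumes U: "bounded U" and f: "C-lipschitz_on U f"
  obtains A where "0 \<le> A" "\<And>x. x \<in> U \<Longrightarrow> \<bar>f x\<bar> \<le> A"
proof (cases "U = {}")
  case False
  then obtain x0 where x0: "x0 \<in> U" by blast
  from U obtain r where r: "\<And>x. x \<in> U \<Longrightarrow> dist x0 x \<le> r"
    unfolding bounded_any_center[of _ x0] by blast
  show ?thesis
  proof
    fix x assume x: "x \<in> U"
    have "\<bar>f x\<bar> \<le> \<bar>f x0\<bar> + dist (f x0) (f x)" by (simp add: dist_real_def)
    also have "\<dots> \<le> \<bar>f x0\<bar> + C * r"
      using lipschitz_onD[OF f x0 x] r[OF x] lipschitz_on_nonneg[OF f]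
      by (smt (verit, best) mult_left_mono)
    finally show "\<bar>f x\<bar> \<le> \<bar>f x0\<bar> + C * r" .
  next
    show "0 \<le> \<bar>f x0\<bar> + C * r"
      using r[OF x0] lipschitz_on_nonneg[OF f] by simp
  qed
qed (use that in auto)

lemma lipschitz_on_mult_bounded:
  fixes f g :: "'a::metric_space \<Rightarrow> real"
  assumes U: "bounded U" and f: "C-lipschitz_on U f" and g: "D-lipschitz_on U g"
  shows "\<exists>E. E-lipschitz_on U (\<lambda>x. f x * g x)"
proof -
  obtain A where A: "0 \<le> A" "\<And>x. x \<in> U \<Longrightarrow> \<bar>f x\<bar> \<le> A"
    using lipschitz_on_real_boundedE[OF U f] by blast
  obtain B where B: "0 \<le> B" "\<And>x. x \<in> U \<Longrightarrow> \<bar>g x\<bar> \<le> B"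
    using lipschitz_on_real_boundedE[OF U g] by blast
  have CD: "0 \<le> C" "0 \<le> D" using f g by (simp_all add: lipschitz_on_nonneg)
  show ?thesis
  proof (intro exI lipschitz_onI)
    fix x y assume xy: "x \<in> U" "y \<in> U"
    have "f x * g x - f y * g y = f x * (g x - g y) + g y * (f x - f y)"
      by (simp add: algebra_simps)
    then have "dist (f x * g x) (f y * g y) \<le> \<bar>f x\<bar> * dist (g x) (g y) + \<bar>g y\<bar> * dist (f x) (f y)"
      by (metis abs_mult abs_triangle_ineq dist_real_def)
    also have "\<dots> \<le> A * (D * dist x y) + B * (C * dist x y)"
      using A B xy lipschitz_onD[OF f xy] lipschitz_onD[OF g xy]
      by (intro add_mono mult_mono) auto
    finally show "dist (f x * g x) (f y * g y) \<le> (A * D + B * C) * dist x y"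
      by (simp add: algebra_simps)
  qed (use A B CD in simp)
qed

lemma lipschitz_on_sum_exists:
  fixes f :: "'i \<Rightarrow> 'a::metric_space \<Rightarrow> 'b::real_normed_vector"
  assumes "finite I" "\<And>i. i \<in> I \<Longrightarrow> \<exists>C. C-lipschitz_on U (f i)"
  shows "\<exists>C. C-lipschitz_on U (\<lambda>x. \<Sum>i\<in>I. f i x)"
  using assms
proof (induction I rule: finite_induct)
  case empty
  show ?case using lipschitz_on_constant by auto
next
  case (insert i I)
  then obtain C D where "C-lipschitz_on U (f i)" "D-lipschitz_on U (\<lambda>x. \<Sum>i\<in>I. f i x)"
    by blast
  then show ?case using insert.hyps by (auto intro: lipschitz_on_add)
qed

lemma lipschitz_on_vec_components:
  fixes f :: "'a::metric_space \<Rightarrow> real^'n"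
  assumes "\<And>i. \<exists>C. C-lipschitz_on U (\<lambda>x. f x $ i)"
  shows "\<exists>C. C-lipschitz_on U f"
proof -
  obtain C where C: "\<And>i. (C i)-lipschitz_on U (\<lambda>x. f x $ i)"
    using assms by metis
  show ?thesis
  proof (intro exI lipschitz_onI)
    fix x y assume xy: "x \<in> U" "y \<in> U"
    have "dist (f x) (f y) \<le> (\<Sum>i\<in>UNIV. \<bar>f x $ i - f y $ i\<bar>)"
      using norm_le_l1_cart[of "f x - f y"] by (simp add: dist_norm)
    also have "\<dots> \<le> (\<Sum>i\<in>UNIV. C i * dist x y)"
      using lipschitz_onD[OF C xy] by (intro sum_mono) (simp add: dist_real_def)
    finally show "dist (f x) (f y) \<le> (\<Sum>i\<in>UNIV. C i) * dist x y"
      by (simp add: sum_distrib_right)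
  qed (use C lipschitz_on_nonneg in \<open>blast intro: sum_nonneg\<close>)
qed

lemma lipschitz_on_vec_nth: "1-lipschitz_on U (\<lambda>x::real^'n. x $ i)"
  by (rule lipschitz_onI) (simp_all add: dist_norm component_le_norm_cart flip: vector_minus_component)

text \<open>Every component of ibr P is a polynomial in the coordinates.\<close>
lemma ibr_lipschitz_on_bounded:
  fixes U :: "(real^'n) set" and P :: "'n \<Rightarrow> 'n \<Rightarrow> real"
  assumes "bounded U"
  shows "\<exists>L. L-lipschitz_on U (ibr P)"
proof -
  have nth: "\<exists>C. C-lipschitz_on U (\<lambda>x::real^'n. x $ i)" for i
    using lipschitz_on_vec_nth by blast
  have mult: "\<exists>E. E-lipschitz_on U (\<lambda>x. f x * g x)"
    if "\<exists>C. C-lipschitz_on U f" "\<exists>D. D-lipschitz_on U g" for f g :: "real^'n \<Rightarrow> real"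
    using that lipschitz_on_mult_bounded[OF assms] by blast
  have const: "\<exists>C. C-lipschitz_on U (\<lambda>x::real^'n. c)" for c :: real
    using lipschitz_on_constant by blast
  show ?thesis
    unfolding ibr_def
    by (intro lipschitz_on_vec_components)
      (simp only: vec_lambda_beta, intro mult nth lipschitz_on_sum_exists finite const ballI)
qed

section \<open>Uniqueness of solutions\<close>

lemma constant_of_zero_derivative:
  fixes f :: "real \<Rightarrow> real"
  assumes "\<And>t. t \<ge> 0 \<Longrightarrow> (f has_real_derivative 0) (at t within {0..})" "t \<ge> 0"
  shows "f t = f 0"
proof -
  obtain k where "\<And>t. t \<in> {0..} \<Longrightarrow> f t = k"
    using has_vector_derivative_zero_constant[of "{0..}" f] assms(1)
    by (auto simp: has_real_derivative_iff_has_vector_derivative)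
  then show ?thesis using assms(2) by simp
qed

lemma exp_weighted_decreasing:
  fixes e e' :: "real \<Rightarrow> real"
  assumes "a \<le> b" "continuous_on {a..b} e"
    and "\<And>t. a < t \<Longrightarrow> t < b \<Longrightarrow> (e has_real_derivative e' t) (at t)"
    and "\<And>t. a < t \<Longrightarrow> t < b \<Longrightarrow> e' t \<le> K * e t"
  shows "e b * exp (- K * b) \<le> e a * exp (- K * a)"
proof (rule DERIV_nonpos_imp_decreasing_open[OF \<open>a \<le> b\<close>])
  fix t assume t: "a < t" "t < b"
  have "((\<lambda>t. e t * exp (- K * t)) has_real_derivative (e' t - K * e t) * exp (- K * t)) (at t)"
    using assms(3)[OF t] by (auto intro!: derivative_eq_intros simp: algebra_simps)
  moreover have "(e' t - K * e t) * exp (- K * t) \<le> 0"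
    using assms(4)[OF t] by (simp add: mult_nonpos_nonneg)
  ultimately show "\<exists>y. ((\<lambda>t. e t * exp (- K * t)) has_real_derivative y) (at t) \<and> y \<le> 0"
    by blast
qed (use assms(2) in \<open>intro continuous_intros\<close>)

lemma gronwall_vanishing:
  fixes e e' :: "real \<Rightarrow> real"
  assumes cont: "continuous_on {0..} e"
    and deriv: "\<And>t. t > 0 \<Longrightarrow> (e has_real_derivative e' t) (at t)"
    and bound: "\<And>t. t > 0 \<Longrightarrow> \<bar>e' t\<bar> \<le> L * e t"
    and nonneg: "\<And>t. t \<ge> 0 \<Longrightarrow> e t \<ge> 0"
    and zero: "t1 > 0" "e t1 = 0"
    and "t \<ge> 0"
  shows "e t = 0"
proof (cases "t1 \<le> t")
  case True
  have "e t * exp (- L * t) \<le> e t1 * exp (- L * t1)"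
    by (rule exp_weighted_decreasing[OF True continuous_on_subset[OF cont] deriv])
      (use zero bound in \<open>auto simp: abs_le_iff\<close>)
  then show ?thesis using zero nonneg[OF \<open>t \<ge> 0\<close>] by (simp add: mult_le_0_iff)
next
  case False
  have "continuous_on {t..t1} e"
    using cont by (rule continuous_on_subset) (use \<open>t \<ge> 0\<close> in auto)
  then have "- e t1 * exp (- (- L) * t1) \<le> - e t * exp (- (- L) * t)"
    using False \<open>t \<ge> 0\<close> bound
    by (intro exp_weighted_decreasing[where e' = "\<lambda>t. - e' t"] continuous_on_minus
        derivative_intros deriv) (auto simp: abs_le_iff)
  then show ?thesis using zero nonneg[OF \<open>t \<ge> 0\<close>] by (simp add: mult_le_0_iff)
qed

lemma autonomous_return_imp_periodic:
  fixes s :: "real \<Rightarrow> 'a::real_inner"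
  assumes lip: "L-lipschitz_on S f"
    and sol: "\<And>t. t \<ge> 0 \<Longrightarrow> (s has_vector_derivative f (s t)) (at t within {0..})"
    and inS: "\<And>t. t \<ge> 0 \<Longrightarrow> s t \<in> S"
    and return: "t1 > 0" "T \<ge> 0" "s (t1 + T) = s t1"
    and "t \<ge> 0"
  shows "s (t + T) = s t"
proof -
  have sol_at: "(s has_vector_derivative f (s t)) (at t)" if "t > 0" for t
    using sol[of t] that by (simp add: at_within_interior[of t "{0..}"])
  have shifted: "((\<lambda>t. s (t + T)) has_vector_derivative f (s (t + T))) (at t)" if "t > 0" for t
  proof -
    have "((\<lambda>t. t + T) has_vector_derivative 1) (at t)"
      by (auto intro!: derivative_eq_intros)
    from vector_diff_chain_at[OF this sol_at[of "t + T"]] show ?thesis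
      using that \<open>T \<ge> 0\<close> by (simp add: o_def)
  qed
  define g where "g t = s (t + T) - s t" for t
  define e where "e = (\<lambda>t. inner (g t) (g t))"
  have g_deriv: "(g has_vector_derivative f (s (t + T)) - f (s t)) (at t)" if "t > 0" for t
    unfolding g_def using shifted[OF that] sol_at[OF that] by (rule has_vector_derivative_diff)
  have e_deriv: "(e has_real_derivative 2 * inner (g t) (f (s (t + T)) - f (s t))) (at t)"
    if "t > 0" for t
    using bounded_bilinear.has_vector_derivative[OF bounded_bilinear_inner g_deriv[OF that] g_deriv[OF that]]
    by (simp add: e_def has_real_derivative_iff_has_vector_derivative inner_commute)
  have cont: "continuous_on {0..} s"
    using sol by (auto simp: continuous_on_eq_continuous_within intro: has_vector_derivative_continuous)
  have "continuous_on {0..} (\<lambda>t. s (t + T))"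
    using \<open>T \<ge> 0\<close> by (intro continuous_on_compose2[OF cont] continuous_intros) auto
  then have e_cont: "continuous_on {0..} e"
    unfolding e_def g_def using cont by (intro continuous_intros)
  have e_bound: "\<bar>2 * inner (g t) (f (s (t + T)) - f (s t))\<bar> \<le> 2 * L * e t" if "t > 0" for t
  proof -
    have "\<bar>inner (g t) (f (s (t + T)) - f (s t))\<bar> \<le> norm (g t) * norm (f (s (t + T)) - f (s t))"
      by (rule Cauchy_Schwarz_ineq2)
    also have "\<dots> \<le> norm (g t) * (L * norm (g t))"
      using lipschitz_on_normD[OF lip inS inS] that \<open>T \<ge> 0\<close>
      by (intro mult_left_mono) (auto simp: g_def)
    finally have "\<bar>inner (g t) (f (s (t + T)) - f (s t))\<bar> \<le> L * inner (g t) (g t)"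
      by (simp add: power2_norm_eq_inner[symmetric] power2_eq_square mult_ac)
    then show ?thesis by (simp add: e_def abs_mult)
  qed
  have "e t = 0"
    by (rule gronwall_vanishing[OF e_cont e_deriv e_bound _ return(1) _ \<open>t \<ge> 0\<close>])
      (use return(3) in \<open>auto simp: e_def g_def\<close>)
  then show ?thesis by (simp add: e_def g_def)
qed

section \<open>Planar curves winding around the origin\<close>

lemma first_zero_after:
  fixes v :: "real \<Rightarrow> real"
  assumes "a \<le> b" "continuous_on {a..b} v" "v a > 0" "v b \<le> 0"
  obtains t1 where "a < t1" "t1 \<le> b" "v t1 = 0" "\<And>t. a \<le> t \<Longrightarrow> t < t1 \<Longrightarrow> v t > 0"
proof -
  define Z where "Z = {t \<in> {a..b}. v t = 0}"
  obtain z where "a \<le> z" "z \<le> b" "v z = 0"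
    using IVT2'[of v b 0 a] assms by auto
  then have "Z \<noteq> {}" unfolding Z_def by auto
  moreover have "bdd_below Z" unfolding Z_def by (rule bdd_belowI[of _ a]) auto
  moreover have "closed Z"
    unfolding Z_def by (rule continuous_closed_preimage_constant) (use assms in auto)
  ultimately have "Inf Z \<in> Z" by (rule closed_contains_Inf)
  then have t1: "a \<le> Inf Z" "Inf Z \<le> b" "v (Inf Z) = 0" unfolding Z_def by auto
  have before: "v t > 0" if t: "a \<le> t" "t < Inf Z" for t
  proof (rule ccontr)
    assume "\<not> v t > 0"
    moreover have "continuous_on {a..t} v"
      using assms(2) by (rule continuous_on_subset) (use t t1 in auto)
    ultimately obtain w where "a \<le> w" "w \<le> t" "v w = 0"
      using IVT2'[of v t 0 a] t assms(3) by auto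
    then have "w \<in> Z" unfolding Z_def using t t1 by auto
    then have "Inf Z \<le> w" by (rule cInf_lower) fact
    then show False using \<open>w \<le> t\<close> t by simp
  qed
  have "a < Inf Z" using t1 assms(3) by (cases "a = Inf Z") auto
  with t1 before show ?thesis by (intro that) auto
qed

locale planar_rotation =
  fixes u v u' v' :: "real \<Rightarrow> real" and d R :: real
  assumes u_deriv: "\<And>t. t > 0 \<Longrightarrow> (u has_real_derivative u' t) (at t)"
    and v_deriv: "\<And>t. t > 0 \<Longrightarrow> (v has_real_derivative v' t) (at t)"
    and angular_speed: "\<And>t. t > 0 \<Longrightarrow> d \<le> u t * v' t - v t * u' t"
    and d_pos: "d > 0"
    and bounded: "\<And>t. t > 0 \<Longrightarrow> (u t)\<^sup>2 + (v t)\<^sup>2 \<le> R"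
begin

lemma reflection: "planar_rotation (\<lambda>t. - u t) (\<lambda>t. - v t) (\<lambda>t. - u' t) (\<lambda>t. - v' t) d R"
  using u_deriv v_deriv angular_speed d_pos bounded
  by unfold_locales (auto intro: DERIV_minus)

lemma v_continuous_on: "0 < a \<Longrightarrow> continuous_on {a..b} v"
  by (intro continuous_at_imp_continuous_on ballI DERIV_isCont[OF v_deriv]) auto

text \<open>While v > 0 the angle arctan (u / v) decreases at rate at least d / R, so it cannot
  stay in the upper half plane longer than pi R / d.\<close>
lemma leaves_upper_half_plane:
  assumes "t0 > 0"
  shows "\<exists>t\<ge>t0. v t \<le> 0"
proof (rule ccontr)
  assume "\<not> ?thesis"
  then have pos: "\<And>t. t \<ge> t0 \<Longrightarrow> v t > 0" by force
  have "0 < (u t0)\<^sup>2 + (v t0)\<^sup>2" using pos[of t0] by (simp add: add_nonneg_pos)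
  then have R_pos: "R > 0" using bounded[OF assms] by linarith
  define g where "g t = arctan (u t / v t) + d / R * t" for t
  define t1 where "t1 = t0 + pi * R / d"
  have "t0 \<le> t1" unfolding t1_def using R_pos d_pos by simp
  have g_deriv: "(g has_real_derivative
      (u' t * v t - u t * v' t) / ((u t)\<^sup>2 + (v t)\<^sup>2) + d / R) (at t)" if "t \<ge> t0" for t
  proof -
    have vt: "v t > 0" and t_pos: "t > 0" using pos that assms by auto
    have "(g has_real_derivative
        1 / (1 + (u t / v t)\<^sup>2) * ((u' t * v t - u t * v' t) / (v t * v t)) + d / R) (at t)"
      unfolding g_def using vt
      by (auto intro!: derivative_eq_intros u_deriv v_deriv t_pos simp: power2_eq_square divide_simps)
    moreover have "1 + (u t / v t)\<^sup>2 = ((u t)\<^sup>2 + (v t)\<^sup>2) / (v t * v t)"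
      using vt by (simp add: field_simps power2_eq_square)
    ultimately show ?thesis
      using vt by (simp add: add_nonneg_pos)
  qed
  have "g t1 \<le> g t0"
  proof (rule DERIV_nonpos_imp_decreasing_open[OF \<open>t0 \<le> t1\<close>])
    fix t assume t: "t0 < t" "t < t1"
    have t_pos: "t > 0" using t assms by auto
    have r: "0 < (u t)\<^sup>2 + (v t)\<^sup>2" using pos[of t] t by (simp add: add_nonneg_pos)
    have "(u' t * v t - u t * v' t) / ((u t)\<^sup>2 + (v t)\<^sup>2) \<le> - d / ((u t)\<^sup>2 + (v t)\<^sup>2)"
      using angular_speed[OF t_pos] r by (intro divide_right_mono) (auto simp: algebra_simps)
    also have "\<dots> \<le> - d / R"
      using bounded[OF t_pos] r d_pos by (simp add: frac_le)
    finally show "\<exists>y. (g has_real_derivative y) (at t) \<and> y \<le> 0"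
      using g_deriv[of t] t by (intro exI conjI) auto
  next
    show "continuous_on {t0..t1} g"
      by (intro continuous_at_imp_continuous_on ballI DERIV_isCont[OF g_deriv]) auto
  qed
  moreover have "d / R * t1 = d / R * t0 + pi" unfolding t1_def using R_pos d_pos
    by (simp add: field_simps)
  moreover have "arctan (u t0 / v t0) < pi / 2" "- (pi / 2) < arctan (u t1 / v t1)"
    using arctan_bounded by auto
  ultimately show False unfolding g_def by linarith
qed

lemma v_increasing_on_positive_axis:
  assumes "t > 0" "v t = 0" "u t \<ge> 0"
  shows "u t > 0" "v' t > 0"
proof -
  have "0 < u t * v' t" using angular_speed[OF assms(1)] assms(2) d_pos by simp
  then show "u t > 0" "v' t > 0"
    using assms(3) by (auto simp: zero_less_mult_iff)
qed

lemma crosses_negative_axis: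
  assumes "t0 > 0" "v t0 > 0 \<or> (v t0 = 0 \<and> u t0 > 0)"
  shows "\<exists>t1>t0. v t1 = 0 \<and> u t1 < 0"
proof -
  obtain a where a: "a \<ge> t0" "v a > 0"
  proof (cases "v t0 > 0")
    case False
    with assms have "v t0 = 0" "u t0 > 0" by auto
    then have "v' t0 > 0" using v_increasing_on_positive_axis \<open>t0 > 0\<close> by simp
    from DERIV_pos_inc_right[OF v_deriv[OF \<open>t0 > 0\<close>] this] obtain h
      where "h > 0" "\<And>k. 0 < k \<Longrightarrow> k < h \<Longrightarrow> v t0 < v (t0 + k)" by auto
    then show ?thesis using that[of "t0 + h / 2"] \<open>v t0 = 0\<close> by auto
  qed (use that in auto)
  have a_pos: "a > 0" using a assms by simp
  obtain b where "a \<le> b" "v b \<le> 0"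
    using leaves_upper_half_plane[OF a_pos] by blast
  with first_zero_after[OF _ v_continuous_on[OF a_pos] a(2)]
  obtain t1 where t1: "a < t1" "v t1 = 0" and before: "\<And>t. a \<le> t \<Longrightarrow> t < t1 \<Longrightarrow> v t > 0"
    by blast
  have t1_pos: "t1 > 0" using t1 a assms by simp
  have "u t1 < 0"
  proof (rule ccontr)
    assume "\<not> u t1 < 0"
    then have "v' t1 > 0" using v_increasing_on_positive_axis t1_pos t1 by simp
    from DERIV_pos_inc_left[OF v_deriv[OF t1_pos] this] obtain h
      where h: "h > 0" "\<And>k. 0 < k \<Longrightarrow> k < h \<Longrightarrow> v (t1 - k) < v t1" by auto
    define k where "k = min (h / 2) (t1 - a)"
    have "0 < k" "k < h" using h t1 unfolding k_def by auto
    then have "v (t1 - k) < 0" using h t1 by auto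
    moreover have "v (t1 - k) > 0" using before \<open>0 < k\<close> by (simp add: k_def)
    ultimately show False by simp
  qed
  then show ?thesis using t1 a by (intro exI[of _ t1]) auto
qed

lemma crosses_positive_axis:
  assumes "t0 > 0"
  shows "\<exists>t1>t0. v t1 = 0 \<and> u t1 > 0"
proof -
  \<comment> \<open>reflection through the origin exchanges the two half-axes\<close>
  note reflected = planar_rotation.crosses_negative_axis[OF reflection]
  have "u t0 \<noteq> 0" if "v t0 = 0"
    using angular_speed[OF assms] that d_pos by auto
  then consider "v t0 > 0 \<or> (v t0 = 0 \<and> u t0 > 0)" | "- v t0 > 0 \<or> (- v t0 = 0 \<and> - u t0 > 0)"
    by linarith
  then show ?thesis
  proof cases
    case 1
    then obtain t1 where t1: "t1 > t0" "v t1 = 0" "u t1 < 0"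
      using crosses_negative_axis assms by blast
    then obtain t2 where "t2 > t1" "v t2 = 0" "u t2 > 0"
      using reflected[of t1] t1 assms by auto
    then show ?thesis using t1 by (intro exI[of _ t2]) auto
  next
    case 2
    then obtain t1 where "t1 > t0" "- v t1 = 0" "- u t1 < 0"
      using reflected[OF assms] by blast
    then show ?thesis by auto
  qed
qed

end

section \<open>The Rock-Paper-Scissors field\<close>

text \<open>The factor 1 - xy - xz - yz of the RPS field, made homogeneous: it equals
  (x + y + z)^2 - (xy + yz + zx), which is what the IBR formula yields off the simplex.\<close>
definition rps_rate :: "real \<Rightarrow> real \<Rightarrow> real \<Rightarrow> real" where
  "rps_rate x y z = x\<^sup>2 + y\<^sup>2 + z\<^sup>2 + x * y + y * z + z * x"

lemma ibr_rps_components: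
  assumes "a > 0" "b > 0"
  shows "ibr (rps a b) p $ 1 = p$1 * (p$3 - p$2) * rps_rate (p$1) (p$2) (p$3)"
    "ibr (rps a b) p $ 2 = p$2 * (p$1 - p$3) * rps_rate (p$1) (p$2) (p$3)"
    "ibr (rps a b) p $ 3 = p$3 * (p$2 - p$1) * rps_rate (p$1) (p$2) (p$3)"
  using assms unfolding ibr_def rps_def rps_rate_def UNIV_3
  by (simp_all add: algebra_simps power2_eq_square)

lemma rps_rate_on_simplex:
  assumes "x + y + z = 1"
  shows "rps_rate x y z = 1 - x * y - x * z - y * z"
proof -
  have z: "z = 1 - x - y" using assms by simp
  show ?thesis unfolding rps_rate_def z by (simp add: algebra_simps power2_eq_square)
qed

lemma pairwise_products_on_simplex:
  fixes x y z :: real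
  assumes "x + y + z = 1"
  shows "(x - y)\<^sup>2 + (y - z)\<^sup>2 + (z - x)\<^sup>2 = 2 - 6 * (x * y + y * z + z * x)"
proof -
  have z: "z = 1 - x - y" using assms by simp
  show ?thesis unfolding z by (simp add: algebra_simps power2_eq_square)
qed

lemma pairwise_products_sq_ge:
  "3 * (x * y * z) * (x + y + z) \<le> (x * y + y * z + z * x)\<^sup>2" for x y z :: real
proof -
  have "2 * ((x * y + y * z + z * x)\<^sup>2 - 3 * (x * y * z) * (x + y + z))
      = (x * y - y * z)\<^sup>2 + (y * z - z * x)\<^sup>2 + (z * x - x * y)\<^sup>2"
    by (simp add: algebra_simps power2_eq_square)
  moreover have "0 \<le> (x * y - y * z)\<^sup>2 + (y * z - z * x)\<^sup>2 + (z * x - x * y)\<^sup>2" by simp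
  ultimately show ?thesis by (smt (verit))
qed

lemma pairwise_products_le_third:
  fixes x y z :: real
  assumes "x + y + z = 1"
  shows "x * y + y * z + z * x \<le> 1 / 3"
    and "x * y + y * z + z * x = 1 / 3 \<longleftrightarrow> x = y \<and> y = z"
proof -
  define e where "e = x * y + y * z + z * x"
  define S where "S = (x - y)\<^sup>2 + (y - z)\<^sup>2 + (z - x)\<^sup>2"
  have eq: "S = 2 - 6 * e"
    unfolding e_def S_def by (rule pairwise_products_on_simplex[OF assms])
  have "0 \<le> S" unfolding S_def by simp
  with eq show "x * y + y * z + z * x \<le> 1 / 3" unfolding e_def[symmetric] by linarith
  have "S = 0 \<longleftrightarrow> x = y \<and> y = z"
    unfolding S_def by (smt (verit) power2_less_eq_zero_iff zero_le_power2)
  with eq show "x * y + y * z + z * x = 1 / 3 \<longleftrightarrow> x = y \<and> y = z"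
    unfolding e_def[symmetric] by linarith
qed

lemma product_lt_on_simplex:
  fixes x y z :: real
  assumes "0 < x" "0 < y" "0 < z" "x + y + z = 1" "\<not> (x = y \<and> y = z)"
  shows "x * y * z < 1 / 27"
proof -
  let ?e = "x * y + y * z + z * x"
  have "?e < 1 / 3" using pairwise_products_le_third[OF assms(4)] assms(5) by linarith
  moreover have "0 < ?e" using assms by (simp add: add_pos_pos)
  ultimately have "?e\<^sup>2 < (1 / 3)\<^sup>2" by (intro power_strict_mono) auto
  with pairwise_products_sq_ge[of x y z] assms(4) show ?thesis by (simp add: power2_eq_square)
qed

lemma rps_cross_identity:
  fixes x y z :: real
  assumes "x + y + z = 1"
  shows "(3 * x - 1) * (3 * (y * (x - z) * rps_rate x y z - z * (y - x) * rps_rate x y z))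
       - 3 * (y - z) * (3 * (x * (z - y) * rps_rate x y z))
     = 6 * rps_rate x y z * (x * y + y * z + z * x - 9 * (x * y * z))"
proof -
  have z: "z = 1 - x - y" using assms by simp
  show ?thesis unfolding rps_rate_def z by (simp add: algebra_simps power2_eq_square)
qed

lemma rps_angular_speed_bound:
  fixes x y z :: real
  assumes "0 < x" "0 < y" "0 < z" "x + y + z = 1"
  shows "4 * (sqrt (3 * (x * y * z)) - 9 * (x * y * z))
    \<le> (3 * x - 1) * (3 * (y * (x - z) * rps_rate x y z - z * (y - x) * rps_rate x y z))
       - 3 * (y - z) * (3 * (x * (z - y) * rps_rate x y z))"
proof -
  define e where "e = x * y + y * z + z * x"
  define c where "c = x * y * z"
  have e_le: "e \<le> 1 / 3" unfolding e_def by (rule pairwise_products_le_third[OF assms(4)])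
  have e_pos: "0 < e" unfolding e_def using assms by (simp add: add_pos_pos)
  have c_le: "3 * c \<le> e\<^sup>2"
    using pairwise_products_sq_ge[of x y z] assms(4) by (simp add: e_def c_def)
  have "sqrt (3 * c) \<le> e" using e_pos c_le by (intro real_le_lsqrt) auto
  have "9 * c \<le> e"
  proof -
    have "e\<^sup>2 \<le> e * (1 / 3)" using e_pos e_le by (simp add: power2_eq_square)
    with c_le show ?thesis by simp
  qed
  have "2 / 3 \<le> rps_rate x y z"
    using rps_rate_on_simplex[OF assms(4)] e_le by (simp add: e_def algebra_simps)
  have "4 * (sqrt (3 * c) - 9 * c) \<le> 6 * (2 / 3) * (e - 9 * c)"
    using \<open>sqrt (3 * c) \<le> e\<close> by simp
  also have "\<dots> \<le> 6 * rps_rate x y z * (e - 9 * c)"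
    using \<open>2 / 3 \<le> rps_rate x y z\<close> \<open>9 * c \<le> e\<close> by (intro mult_right_mono) auto
  finally have "4 * (sqrt (3 * c) - 9 * c) \<le> 6 * rps_rate x y z * (e - 9 * c)" .
  then show ?thesis unfolding rps_cross_identity[OF assms(4)] by (simp add: e_def c_def)
qed

lemma rps_radius_bound:
  fixes x y z :: real
  assumes "0 < x" "x < 1" "0 < y" "y < 1" "0 < z" "z < 1"
  shows "(3 * x - 1)\<^sup>2 + (3 * (y - z))\<^sup>2 \<le> 13"
proof -
  have "(3 * x - 1)\<^sup>2 \<le> 2\<^sup>2" by (subst power2_le_iff_abs_le) (use assms in auto)
  moreover have "(3 * (y - z))\<^sup>2 \<le> 3\<^sup>2" by (subst power2_le_iff_abs_le) (use assms in auto)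
  ultimately show ?thesis by simp
qed

text \<open>On the ray y = z of the simplex the product is x ((1 - x) / 2)^2, which is strictly
  decreasing for x > 1/3.\<close>
lemma ray_point_unique:
  fixes x1 y1 x2 y2 :: real
  assumes "x1 + 2 * y1 = 1" "x2 + 2 * y2 = 1" "x1 > 1 / 3" "x2 > 1 / 3" "y1 > 0" "y2 > 0"
    and "x1 * y1 * y1 = x2 * y2 * y2"
  shows "x1 = x2"
proof (rule ccontr)
  assume ne: "x1 \<noteq> x2"
  define p where "p = x1 - 1 / 3"
  define q where "q = x2 - 1 / 3"
  have pq: "0 < p" "p < 2 / 3" "0 < q" "q < 2 / 3" using assms unfolding p_def q_def by auto
  have "4 * (x1 * y1 * y1 - x2 * y2 * y2) = (x1 - x2) * (p * (p + q / 2 - 1) + q * (q + p / 2 - 1))"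
    using assms(1,2) unfolding p_def q_def by (simp add: field_simps) algebra
  moreover have "p * (p + q / 2 - 1) + q * (q + p / 2 - 1) < 0"
    using pq by (intro add_neg_neg mult_pos_neg) auto
  ultimately show False using ne assms(7) by simp
qed

lemma bounded_ibr_simplex: "bounded ibr_simplex"
proof -
  have "norm p \<le> 1" if "p \<in> ibr_simplex" for p :: "real^'n"
    using norm_le_l1_cart[of p] that by (simp add: ibr_simplex_def)
  then show ?thesis unfolding bounded_iff by blast
qed

lemma vec3_eq_iff: "p = q \<longleftrightarrow> p$1 = q$1 \<and> p$2 = q$2 \<and> p$3 = q$3" for p q :: "real^3"
  by (simp add: vec_eq_iff forall_3)

lemma ibr_rps_on_simplex:
  assumes "a > 0" "b > 0" "p \<in> ibr_simplex"
  shows "ibr (rps a b) p $ 1 = p$1 * (p$3 - p$2) * (1 - p$1 * p$2 - p$1 * p$3 - p$2 * p$3)"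
    "ibr (rps a b) p $ 2 = p$2 * (p$1 - p$3) * (1 - p$1 * p$2 - p$1 * p$3 - p$2 * p$3)"
    "ibr (rps a b) p $ 3 = p$3 * (p$2 - p$1) * (1 - p$1 * p$2 - p$1 * p$3 - p$2 * p$3)"
proof -
  have "p$1 + p$2 + p$3 = 1" using assms(3) by (simp add: ibr_simplex_def sum_3)
  then have "rps_rate (p$1) (p$2) (p$3) = 1 - p$1 * p$2 - p$1 * p$3 - p$2 * p$3"
    by (rule rps_rate_on_simplex)
  then show "ibr (rps a b) p $ 1 = p$1 * (p$3 - p$2) * (1 - p$1 * p$2 - p$1 * p$3 - p$2 * p$3)"
    "ibr (rps a b) p $ 2 = p$2 * (p$1 - p$3) * (1 - p$1 * p$2 - p$1 * p$3 - p$2 * p$3)"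
    "ibr (rps a b) p $ 3 = p$3 * (p$2 - p$1) * (1 - p$1 * p$2 - p$1 * p$3 - p$2 * p$3)"
    by (simp_all only: ibr_rps_components[OF assms(1,2)])
qed

lemma ibr_rps_rest_points:
  assumes "a > 0" "b > 0"
  shows "{p \<in> ibr_int_simplex. ibr (rps a b) p = 0} = {center3}"
proof (intro equalityI subsetI)
  fix p :: "real^3" assume "p \<in> {p \<in> ibr_int_simplex. ibr (rps a b) p = 0}"
  then have pos: "p$1 > 0" "p$2 > 0" "p$3 > 0" and sum: "p$1 + p$2 + p$3 = 1"
    and rest: "ibr (rps a b) p = 0" by (auto simp: ibr_int_simplex_def sum_3)
  have "rps_rate (p$1) (p$2) (p$3) > 0" using pos by (simp add: rps_rate_def add_pos_pos)
  moreover have "p$1 * (p$3 - p$2) * rps_rate (p$1) (p$2) (p$3) = 0"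
    "p$2 * (p$1 - p$3) * rps_rate (p$1) (p$2) (p$3) = 0"
    using rest by (simp_all only: flip: ibr_rps_components[OF assms]) simp_all
  ultimately have "p$3 = p$2" "p$1 = p$3" using pos by simp_all
  with sum show "p \<in> {center3}" by (simp add: vec3_eq_iff center3_def)
next
  fix p :: "real^3" assume "p \<in> {center3}"
  then have p: "p = center3" by simp
  show "p \<in> {p \<in> ibr_int_simplex. ibr (rps a b) p = 0}"
    unfolding p by (simp add: ibr_int_simplex_def center3_def sum_3 vec3_eq_iff ibr_rps_components[OF assms])
qed

section \<open>Interior orbits\<close>

locale rps_orbit =
  fixes a b :: real and s :: "real \<Rightarrow> real^3"
  assumes a_pos: "a > 0" and b_pos: "b > 0"
    and solves: "\<And>t. t \<ge> 0 \<Longrightarrow> (s has_vector_derivative ibr (rps a b) (s t)) (at t within {0..})"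
    and start_interior: "s 0 \<in> ibr_int_simplex"
    and start_off_center: "s 0 \<noteq> center3"
begin

abbreviation x :: "real \<Rightarrow> real" where "x t \<equiv> s t $ 1"
abbreviation y :: "real \<Rightarrow> real" where "y t \<equiv> s t $ 2"
abbreviation z :: "real \<Rightarrow> real" where "z t \<equiv> s t $ 3"
abbreviation r :: "real \<Rightarrow> real" where "r t \<equiv> rps_rate (x t) (y t) (z t)"

lemma component_deriv:
  "t \<ge> 0 \<Longrightarrow> ((\<lambda>t. s t $ i) has_real_derivative ibr (rps a b) (s t) $ i) (at t within {0..})"
  using bounded_linear.has_vector_derivative[OF bounded_linear_vec_nth solves]
  by (simp add: has_real_derivative_iff_has_vector_derivative)

lemma coordinate_derivs:
  assumes "t \<ge> 0"
  shows "(x has_real_derivative x t * (z t - y t) * r t) (at t within {0..})"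
    "(y has_real_derivative y t * (x t - z t) * r t) (at t within {0..})"
    "(z has_real_derivative z t * (y t - x t) * r t) (at t within {0..})"
  using component_deriv[OF assms, of 1] component_deriv[OF assms, of 2] component_deriv[OF assms, of 3]
  by (simp_all add: ibr_rps_components[OF a_pos b_pos])

lemma coordinate_derivs_at:
  assumes "t > 0"
  shows "(x has_real_derivative x t * (z t - y t) * r t) (at t)"
    "(y has_real_derivative y t * (x t - z t) * r t) (at t)"
    "(z has_real_derivative z t * (y t - x t) * r t) (at t)"
  using coordinate_derivs[of t] assms by (simp_all add: at_within_interior[of t "{0..}"])

lemma sum_invariant:
  assumes "t \<ge> 0"
  shows "x t + y t + z t = 1"
proof -
  have "((\<lambda>t. x t + y t + z t) has_real_derivative 0) (at t within {0..})" if "t \<ge> 0" for t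
  proof -
    note d = coordinate_derivs[OF that]
    show ?thesis
      by (rule DERIV_cong[OF DERIV_add[OF DERIV_add[OF d(1) d(2)] d(3)]]) (simp add: algebra_simps)
  qed
  from constant_of_zero_derivative[OF this assms]
  have "x t + y t + z t = x 0 + y 0 + z 0" .
  also have "\<dots> = 1" using start_interior by (simp add: ibr_int_simplex_def sum_3)
  finally show ?thesis .
qed

definition c :: real where "c = x 0 * y 0 * z 0"

lemma product_invariant:
  assumes "t \<ge> 0"
  shows "x t * y t * z t = c"
proof -
  have "((\<lambda>t. x t * y t * z t) has_real_derivative 0) (at t within {0..})" if "t \<ge> 0" for t
  proof -
    note d = coordinate_derivs[OF that]
    show ?thesis
      by (rule DERIV_cong[OF DERIV_mult'[OF DERIV_mult'[OF d(1) d(2)] d(3)]]) (simp add: algebra_simps)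
  qed
  from constant_of_zero_derivative[OF this assms] show ?thesis unfolding c_def .
qed

lemma c_pos: "c > 0"
  using start_interior by (simp add: ibr_int_simplex_def c_def)

lemma c_lt: "c < 1 / 27"
proof -
  have "x 0 > 0" "y 0 > 0" "z 0 > 0" using start_interior by (simp_all add: ibr_int_simplex_def)
  moreover have "\<not> (x 0 = y 0 \<and> y 0 = z 0)"
    using start_off_center sum_invariant[of 0] by (auto simp: vec3_eq_iff center3_def)
  ultimately show ?thesis
    unfolding c_def using sum_invariant[of 0] by (intro product_lt_on_simplex) auto
qed

text \<open>A coordinate reaching 0 would make the invariant product vanish.\<close>
lemma coordinates_pos:
  assumes "t \<ge> 0"
  shows "0 < s t $ i"
proof (rule ccontr)
  assume "\<not> 0 < s t $ i"
  moreover have "continuous_on {0..t} (\<lambda>t. s t $ i)"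
    by (rule continuous_on_subset[OF DERIV_continuous_on[OF component_deriv]]) auto
  moreover have "0 < s 0 $ i" using start_interior by (simp add: ibr_int_simplex_def)
  ultimately obtain w where w: "0 \<le> w" "s w $ i = 0"
    using IVT2'[of "\<lambda>t. s t $ i" t 0 0] assms by auto
  then have "x w * y w * z w = 0" using exhaust_3[of i] by auto
  then show False using product_invariant[OF w(1)] c_pos by simp
qed

lemma coordinates_lt_1:
  assumes "t \<ge> 0"
  shows "x t < 1" "y t < 1" "z t < 1"
  using sum_invariant[OF assms] coordinates_pos[OF assms, of 1] coordinates_pos[OF assms, of 2]
    coordinates_pos[OF assms, of 3] by linarith+

lemma in_simplex:
  assumes "t \<ge> 0"
  shows "s t \<in> ibr_simplex"
  using coordinates_pos[OF assms, THEN less_imp_le] sum_invariant[OF assms]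
  by (simp add: ibr_simplex_def sum_3)

definition u :: "real \<Rightarrow> real" where "u t = 3 * x t - 1"
definition v :: "real \<Rightarrow> real" where "v t = 3 * (y t - z t)"

text \<open>(u, v) are coordinates centred at the rest point; the invariance of xyz bounds the
  angular speed of the orbit in them from below.\<close>
lemma rotation:
  "planar_rotation u v (\<lambda>t. 3 * (x t * (z t - y t) * r t))
     (\<lambda>t. 3 * (y t * (x t - z t) * r t - z t * (y t - x t) * r t))
     (4 * (sqrt (3 * c) - 9 * c)) 13"
proof
  fix t :: real assume "t > 0"
  then have t: "t \<ge> 0" by simp
  note pos = coordinates_pos[OF t, of 1] coordinates_pos[OF t, of 2] coordinates_pos[OF t, of 3]
  show "(u has_real_derivative 3 * (x t * (z t - y t) * r t)) (at t)"
    unfolding u_def[abs_def] using coordinate_derivs_at[OF \<open>t > 0\<close>]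
    by (auto intro!: derivative_eq_intros)
  show "(v has_real_derivative
      3 * (y t * (x t - z t) * r t - z t * (y t - x t) * r t)) (at t)"
    unfolding v_def[abs_def] using coordinate_derivs_at[OF \<open>t > 0\<close>]
    by (auto intro!: derivative_eq_intros)
  show "4 * (sqrt (3 * c) - 9 * c) \<le> u t * (3 * (y t * (x t - z t) * r t - z t * (y t - x t) * r t))
      - v t * (3 * (x t * (z t - y t) * r t))"
    unfolding u_def v_def product_invariant[OF t, symmetric]
    using rps_angular_speed_bound[OF pos sum_invariant[OF t]] by (simp add: mult.assoc)
  show "(u t)\<^sup>2 + (v t)\<^sup>2 \<le> 13"
    unfolding u_def v_def using pos coordinates_lt_1[OF t] by (intro rps_radius_bound)
next
  have "(9 * c)\<^sup>2 < 3 * c" using c_pos c_lt by (simp add: power2_eq_square)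
  then show "0 < 4 * (sqrt (3 * c) - 9 * c)" using real_less_rsqrt by simp
qed

lemmas crosses_positive_axis = planar_rotation.crosses_positive_axis[OF rotation]
  and crosses_negative_axis = planar_rotation.crosses_negative_axis[OF rotation]

lemma equal_on_positive_axis:
  assumes "t1 \<ge> 0" "t2 \<ge> 0" "v t1 = 0" "u t1 > 0" "v t2 = 0" "u t2 > 0"
  shows "s t1 = s t2"
proof -
  have ray: "x t1 + 2 * y t1 = 1" "z t1 = y t1" "x t1 > 1 / 3"
            "x t2 + 2 * y t2 = 1" "z t2 = y t2" "x t2 > 1 / 3"
    using assms sum_invariant[of t1] sum_invariant[of t2] unfolding u_def v_def by auto
  have "x t1 * y t1 * y t1 = x t2 * y t2 * y t2"
    using ray product_invariant[OF assms(1)] product_invariant[OF assms(2)] by simp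
  moreover have "y t1 > 0" "y t2 > 0"
    using coordinates_pos[OF assms(1), of 2] coordinates_pos[OF assms(2), of 2] by simp_all
  ultimately have "x t1 = x t2"
    using ray ray_point_unique[of "x t1" "y t1" "x t2" "y t2"] by blast
  moreover have "y t1 = y t2" using ray \<open>x t1 = x t2\<close> by linarith
  ultimately show ?thesis using ray by (simp only: vec3_eq_iff)
qed

lemma periodic: "\<exists>T>0. \<forall>t\<ge>0. s (t + T) = s t"
proof -
  obtain t1 where t1: "t1 > 0" "v t1 = 0" "u t1 > 0"
    using crosses_positive_axis[OF zero_less_one] by (meson less_trans zero_less_one)
  obtain t2 where t2: "t2 > t1" "v t2 = 0" "u t2 > 0" using crosses_positive_axis[OF t1(1)] by auto
  obtain L where L: "L-lipschitz_on ibr_simplex (ibr (rps a b))"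
    using ibr_lipschitz_on_bounded[OF bounded_ibr_simplex] by blast
  have return: "s (t1 + (t2 - t1)) = s t1"
    using equal_on_positive_axis[of t2 t1] t1 t2 by simp
  have "0 < t2 - t1" using t2 by simp
  moreover have "\<forall>t\<ge>0. s (t + (t2 - t1)) = s t"
    using autonomous_return_imp_periodic[OF L solves in_simplex t1(1) _ return] calculation
    by simp
  ultimately show ?thesis by blast
qed

lemma nonconstant: "\<exists>t\<ge>0. s t \<noteq> s 0"
proof -
  obtain t1 where t1: "t1 > 0" "v t1 = 0" "u t1 > 0"
    using crosses_positive_axis[OF zero_less_one] by (meson less_trans zero_less_one)
  obtain t2 where t2: "t2 > t1" "u t2 < 0" using crosses_negative_axis[of t1] t1 by auto
  have "s t1 \<noteq> s t2" using t1 t2 by (auto simp: u_def)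
  then show ?thesis using t1 t2 by (metis less_eq_real_def less_trans)
qed

end

theorem proposition4:
  fixes a b :: real
  assumes "a > 0" and "b > 0"
  shows "(\<forall>p \<in> ibr_simplex.
            let x = p$1; y = p$2; z = p$3; q = 1 - x*y - x*z - y*z in
            ibr (rps a b) p $ 1 = x * (z - y) * q \<and>
            ibr (rps a b) p $ 2 = y * (x - z) * q \<and>
            ibr (rps a b) p $ 3 = z * (y - x) * q)
       \<and> {p \<in> ibr_int_simplex. ibr (rps a b) p = 0} = {center3}
       \<and> (\<forall>s :: real \<Rightarrow> real^3.
            (\<forall>t\<ge>0. (s has_vector_derivative ibr (rps a b) (s t)) (at t within {0..}))
            \<and> s 0 \<in> ibr_int_simplex \<and> s 0 \<noteq> center3
            \<longrightarrow> (\<exists>T>0. \<forall>t\<ge>0. s (t + T) = s t) \<and> (\<exists>t\<ge>0. s t \<noteq> s 0))"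
proof (intro conjI ballI allI impI)
  show "let x = p$1; y = p$2; z = p$3; q = 1 - x*y - x*z - y*z in
          ibr (rps a b) p $ 1 = x * (z - y) * q \<and>
          ibr (rps a b) p $ 2 = y * (x - z) * q \<and>
          ibr (rps a b) p $ 3 = z * (y - x) * q" if "p \<in> ibr_simplex" for p
    using ibr_rps_on_simplex[OF assms that] by (simp add: Let_def)
  show "{p \<in> ibr_int_simplex. ibr (rps a b) p = 0} = {center3}"
    by (rule ibr_rps_rest_points[OF assms])
  fix s :: "real \<Rightarrow> real^3"
  assume "(\<forall>t\<ge>0. (s has_vector_derivative ibr (rps a b) (s t)) (at t within {0..}))
    \<and> s 0 \<in> ibr_int_simplex \<and> s 0 \<noteq> center3"
  then interpret rps_orbit a b s
    using assms by unfold_locales auto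
  show "\<exists>T>0. \<forall>t\<ge>0. s (t + T) = s t" by (rule periodic)
  show "\<exists>t\<ge>0. s t \<noteq> s 0" by (rule nonconstant)
qed

end
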